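(* Let $K^{(1)},K^{(2)}$ be independent fractal percolations on $[0,1]$ with the same parameters $M\in\mathbb{N}_{\geq2}$ and $p\in[0,1]$, with construction steps $K^{(1)}_n,K^{(2)}_n$. Then for any $n\in\mathbb{N}_0$, $$\mathbb{E}V_1(K_n^{(1)}\cap K_n^{(2)})=p^{2n}$$ and $$\mathbb{E}V_0(K_n^{(1)}\cap K_n^{(2)})=(Mp^2)^n\left(3-2M^{-n}-4p\frac{M-1}{M-p}\left[1-\left(\frac pM\right)^n\right]+\frac{(M-1)p^2}{M-p^2}\left[1-\left(\frac{p^2}{M}\right)^n\right]\right).$$
   Context: Fractal percolation on $[0,1]$: $K_0=[0,1]$; given $K_{n-1}$, a union of closed grid intervals of length $M^{-(n-1)}$, each is divided into $M$ closed subintervals of length $M^{-n}$, each kept independently (of everything else) with probability $p$; $K_n$ is the union of kept subintervals. $V_1$ is length and $V_0$ the number of connected components of a finite union of compact intervals and points. *)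

theory Defs
  imports "HOL-Analysis.Analysis" "HOL-Probability.Probability"
begin

text \<open>The grid interval of level j with index i (0 \<le> i < M^j) is
  [i M^-j, (i+1) M^-j]; the coin xi (j,i) (j \<ge> 1) decides whether it is kept,
  given that its parent is kept. The level-n interval with index k survives
  in K_n iff all its ancestors (and itself) have coin True.\<close>

definition grid_interval :: "nat \<Rightarrow> nat \<Rightarrow> nat \<Rightarrow> real set" where
  "grid_interval M n k = {real k / real M ^ n .. (real k + 1) / real M ^ n}"

definition percol_step :: "nat \<Rightarrow> (nat \<times> nat \<Rightarrow> bool) \<Rightarrow> nat \<Rightarrow> real set" where
  "percol_step M xi n =
     \<Union> {grid_interval M n k | k. k < M ^ n \<and> (\<forall>j\<in>{1..n}. xi (j, k div M ^ (n - j)))}"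

definition V1 :: "real set \<Rightarrow> real" where
  "V1 S = measure lborel S"

definition V0 :: "real set \<Rightarrow> real" where
  "V0 S = real (card (components S))"

end

theory Submission
  imports Defs
begin

(* At level n both sets are unions of grid cells [k/M^n, (k+1)/M^n], so their intersection
   consists of the cells kept in both copies together with isolated grid nodes where a cell of
   one copy meets the neighbouring cell of the other. Hence V1 is M^-n times the number of
   doubly kept cells, each kept with probability p^(2n), and V0 counts the nodes k/M^n that
   start a component: each copy keeps a cell adjacent to the node, but not both keep cell k-1.
   If the cells k-1 and k share s_k ancestors, independence of the two copies gives this event
   probability (2 p^n - p^(2n - s_k))^2 - p^(2n). Finally n - s_k - 1 is the number of
   trailing zeros of k in base M, so the sums over k satisfy a linear recursion in n whose
   solution is the stated closed form. *)

section \<open>Intersections of unions of grid cells\<close>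

lemma real_grid_cases:
  fixes D :: real and N :: nat
  assumes D: "0 < D" and y: "0 \<le> y" "y \<le> real N / D"
  obtains (node) k where "k \<le> N" and "y = real k / D"
    | (inside) k where "k < N" and "real k / D < y" and "y < (real k + 1) / D"
proof -
  define k where "k = nat \<lfloor>y * D\<rfloor>"
  have k: "real k \<le> y * D" "y * D < real k + 1" and yN: "y * D \<le> real N"
    using D y by (simp_all add: k_def field_simps) linarith+
  show ?thesis
  proof (cases "real k = y * D")
    case True
    then show ?thesis using that(1)[of k] yN D by (simp add: field_simps)
  next
    case False
    then show ?thesis using that(2)[of k] k yN D by (simp add: field_simps)
  qed
qed

lemma atLeastAtMost_subset_join:
  fixes a b c :: "'a :: linorder"
  assumes "{a..b} \<subseteq> S" "{b..c} \<subseteq> S"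
  shows "{a..c} \<subseteq> S"
proof
  fix x assume "x \<in> {a..c}"
  then show "x \<in> S" using assms by (cases "x \<le> b") auto
qed

locale grid_set =
  fixes S :: "real set" and D :: real and N :: nat and node cell :: "nat \<Rightarrow> bool"
  assumes D_pos: "0 < D"
    and subset_grid: "S \<subseteq> {0 .. real N / D}"
    and node_iff: "k \<le> N \<Longrightarrow> real k / D \<in> S \<longleftrightarrow> node k"
    and cell_iff: "k < N \<Longrightarrow> real k / D < y \<Longrightarrow> y < (real k + 1) / D \<Longrightarrow> y \<in> S \<longleftrightarrow> cell k"
    and cell_nodes: "k < N \<Longrightarrow> cell k \<Longrightarrow> node k \<and> node (Suc k)"
begin

definition left_end :: "nat \<Rightarrow> bool" where
  "left_end k \<longleftrightarrow> k \<le> N \<and> node k \<and> \<not> (0 < k \<and> cell (k - 1))"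

lemma cell_subset:
  assumes "k < N" "cell k"
  shows "{real k / D .. (real k + 1) / D} \<subseteq> S"
proof
  fix y assume y: "y \<in> {real k / D .. (real k + 1) / D}"
  consider "y = real k / D" | "y = (real k + 1) / D" | "real k / D < y" "y < (real k + 1) / D"
    using y by (cases "y = real k / D"; cases "y = (real k + 1) / D") auto
  then show "y \<in> S"
    using assms node_iff[of k] node_iff[of "Suc k"] cell_nodes cell_iff by cases (auto simp: add.commute)
qed

lemma left_end_below_node:
  assumes "k \<le> N" "node k"
  shows "\<exists>m\<le>k. left_end m \<and> {real m / D .. real k / D} \<subseteq> S"
  using assms
proof (induction k)
  case 0
  then show ?case using node_iff[of 0] by (auto simp: left_end_def)
next
  case (Suc k)
  show ?case
  proof (cases "cell k")
    case False
    then show ?thesis using Suc.prems node_iff[of "Suc k"] by (auto simp: left_end_def)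
  next
    case True
    with Suc.prems cell_nodes obtain m where m: "m \<le> k" "left_end m" "{real m / D .. real k / D} \<subseteq> S"
      using Suc.IH by fastforce
    moreover have "{real k / D .. real (Suc k) / D} \<subseteq> S"
      using cell_subset True Suc.prems by (simp add: add.commute)
    then have "{real m / D .. real (Suc k) / D} \<subseteq> S"
      by (rule atLeastAtMost_subset_join[OF m(3)])
    with m show ?thesis by (auto intro: exI[of _ m])
  qed
qed

lemma left_end_below:
  assumes "y \<in> S"
  obtains m where "left_end m" "real m / D \<le> y" "{real m / D .. y} \<subseteq> S"
proof -
  have "0 \<le> y" "y \<le> real N / D" using subset_grid assms by auto
  with D_pos show ?thesis
  proof (cases rule: real_grid_cases)
    case (node k)
    then obtain m where "m \<le> k" "left_end m" "{real m / D .. real k / D} \<subseteq> S"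
      using left_end_below_node node_iff assms by blast
    with node show ?thesis using that D_pos by (simp add: divide_right_mono)
  next
    case (inside k)
    then have "cell k" using cell_iff assms by blast
    with inside obtain m where m: "m \<le> k" "left_end m" "{real m / D .. real k / D} \<subseteq> S"
      using left_end_below_node cell_nodes by (meson less_imp_le)
    have "{real k / D .. y} \<subseteq> S" using cell_subset[OF inside(1) \<open>cell k\<close>] inside by auto
    then have "{real m / D .. y} \<subseteq> S" by (rule atLeastAtMost_subset_join[OF m(3)])
    moreover have "real m / D \<le> real k / D" using m(1) D_pos by (simp add: divide_right_mono)
    ultimately show ?thesis using that m(2) inside(2) by simp
  qed
qed

lemma not_subset_across_left_end:
  assumes "left_end m'" "m < m'"
  shows "\<not> {real m / D .. real m' / D} \<subseteq> S"
proof
  assume sub: "{real m / D .. real m' / D} \<subseteq> S"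
  define z where "z = (real m' - 1/2) / D"
  have "0 < m'" "m' - 1 < N" "\<not> cell (m' - 1)" using assms by (auto simp: left_end_def)
  moreover have "z \<in> S" using sub assms D_pos by (auto simp: z_def field_simps)
  moreover have "real (m' - 1) / D < z" "z < (real (m' - 1) + 1) / D"
    using \<open>0 < m'\<close> D_pos by (simp_all add: z_def field_simps of_nat_diff)
  ultimately show False using cell_iff[of "m' - 1" z] by simp
qed

lemma card_components: "card (components S) = card {k. left_end k}"
proof -
  define comp where "comp k = connected_component_set S (real k / D)" for k
  have node_in: "left_end k \<Longrightarrow> real k / D \<in> S" for k using node_iff by (auto simp: left_end_def)
  have "inj_on comp {k. left_end k}"
  proof (rule inj_onI, rule ccontr)
    fix a b assume a: "a \<in> {k. left_end k}" and b: "b \<in> {k. left_end k}"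
      and "comp a = comp b" "a \<noteq> b"
    then have "connected_component S (real a / D) (real b / D)"
      using node_in by (metis comp_def connected_component_eq_eq mem_Collect_eq)
    then have "closed_segment (real a / D) (real b / D) \<subseteq> S"
      "closed_segment (real b / D) (real a / D) \<subseteq> S"
      by (simp_all add: connected_component_1 closed_segment_commute)
    then show False
      using \<open>a \<noteq> b\<close> a b not_subset_across_left_end D_pos
      by (cases a b rule: linorder_cases)
        (auto simp: closed_segment_eq_real_ivl divide_right_mono)
  qed
  moreover have "comp ` {k. left_end k} = components S"
  proof (intro antisym subsetI)
    fix C assume "C \<in> comp ` {k. left_end k}"
    then show "C \<in> components S" using node_in by (auto simp: comp_def components_iff)
  next
    fix C assume "C \<in> components S"
    then obtain y where y: "y \<in> S" "C = connected_component_set S y" by (auto simp: components_iff)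
    then obtain m where m: "left_end m" "real m / D \<le> y" "{real m / D .. y} \<subseteq> S"
      using left_end_below by blast
    then have "connected_component S (real m / D) y"
      by (simp add: connected_component_1 closed_segment_eq_real_ivl)
    then show "C \<in> comp ` {k. left_end k}"
      using y m by (metis comp_def connected_component_eq image_eqI mem_Collect_eq)
  qed
  ultimately show ?thesis by (metis card_image)
qed

lemma measure_eq_card_cells: "measure lborel S = card {k. k < N \<and> cell k} / D"
proof -
  define open_cell where "open_cell k = {real k / D <..< (real k + 1) / D}" for k
  define K where "K = {k. k < N \<and> cell k}"
  define U where "U = (\<Union>k\<in>K. open_cell k)"
  have "U \<subseteq> S"
  proof (unfold U_def, rule UN_least)
    fix k assume "k \<in> K"
    then have "{real k / D .. (real k + 1) / D} \<subseteq> S" using cell_subset by (simp add: K_def)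
    then show "open_cell k \<subseteq> S" by (auto simp: open_cell_def)
  qed
  have "S - U \<subseteq> (\<lambda>k. real k / D) ` {..N}"
  proof
    fix y assume y: "y \<in> S - U"
    then have "0 \<le> y" "y \<le> real N / D" using subset_grid by auto
    with D_pos show "y \<in> (\<lambda>k. real k / D) ` {..N}"
      by (cases rule: real_grid_cases) (use y cell_iff in \<open>auto simp: U_def K_def open_cell_def\<close>)
  qed
  then have "finite (S - U)" by (rule finite_subset) simp
  moreover have "U \<in> sets lborel" by (simp add: U_def open_cell_def)
  then have "measure lborel (U \<union> (S - U)) = measure lborel U"
    using \<open>finite (S - U)\<close> by (intro measure_Un_null_set finite_imp_null_set_lborel)
  moreover have "U \<union> (S - U) = S" using \<open>U \<subseteq> S\<close> by blast
  ultimately have "measure lborel S = measure lborel U" by simp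
  also have "\<dots> = (\<Sum>k\<in>K. measure lborel (open_cell k))"
    unfolding U_def
  proof (rule measure_finite_Union)
    show "disjoint_family_on open_cell K"
      unfolding disjoint_family_on_def
    proof (intro ballI impI, rule ccontr)
      fix i j assume "i \<noteq> j" "open_cell i \<inter> open_cell j \<noteq> {}"
      then obtain y where "y \<in> open_cell i" "y \<in> open_cell j" by blast
      then have "real i < y * D" "y * D < real i + 1" "real j < y * D" "y * D < real j + 1"
        using D_pos by (auto simp: open_cell_def field_simps)
      with \<open>i \<noteq> j\<close> show False by linarith
    qed
    show "emeasure lborel (open_cell k) \<noteq> \<infinity>" for k
    proof -
      have "real k / D \<le> (real k + 1) / D" using D_pos by (simp add: divide_right_mono)
      then show ?thesis by (simp add: open_cell_def)
    qed
  qed (auto simp: K_def open_cell_def)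
  also have "\<dots> = card K / D"
    using D_pos by (simp add: open_cell_def field_simps)
  finally show ?thesis by (simp add: K_def)
qed

end

definition cell_union :: "real \<Rightarrow> nat \<Rightarrow> (nat \<Rightarrow> bool) \<Rightarrow> real set" where
  "cell_union D N a = (\<Union>k\<in>{k. k < N \<and> a k}. {real k / D .. (real k + 1) / D})"

lemma mem_cell_union:
  "y \<in> cell_union D N a \<longleftrightarrow> (\<exists>k<N. a k \<and> real k / D \<le> y \<and> y \<le> (real k + 1) / D)"
  by (auto simp: cell_union_def)

definition adjacent_cell :: "nat \<Rightarrow> (nat \<Rightarrow> bool) \<Rightarrow> nat \<Rightarrow> bool" where
  "adjacent_cell N a m \<longleftrightarrow> m < N \<and> a m \<or> 0 < m \<and> m - 1 < N \<and> a (m - 1)"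

lemma node_mem_cell_union:
  assumes "0 < D"
  shows "real m / D \<in> cell_union D N a \<longleftrightarrow> adjacent_cell N a m"
proof -
  have "real k / D \<le> real m / D \<and> real m / D \<le> (real k + 1) / D \<longleftrightarrow> m = k \<or> m = Suc k" for k
    using assms by (auto simp: divide_le_cancel)
  then show ?thesis
    unfolding mem_cell_union adjacent_cell_def by (cases m) auto
qed

lemma open_cell_mem_cell_union:
  assumes "0 < D" "real m / D < y" "y < (real m + 1) / D"
  shows "y \<in> cell_union D N a \<longleftrightarrow> m < N \<and> a m"
proof -
  have "real k / D \<le> y \<and> y \<le> (real k + 1) / D \<longleftrightarrow> k = m" for k
  proof
    assume "real k / D \<le> y \<and> y \<le> (real k + 1) / D"
    then have "real k < real m + 1" "real m < real k + 1"
      using assms by (auto simp: field_simps)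
    then show "k = m" by linarith
  qed (use assms in auto)
  then show ?thesis unfolding mem_cell_union by auto
qed

definition component_start :: "(nat \<Rightarrow> bool) \<Rightarrow> (nat \<Rightarrow> bool) \<Rightarrow> nat \<Rightarrow> bool" where
  "component_start a b k \<longleftrightarrow>
     (a k \<or> 0 < k \<and> a (k - 1)) \<and> (b k \<or> 0 < k \<and> b (k - 1)) \<and> \<not> (0 < k \<and> a (k - 1) \<and> b (k - 1))"

lemma grid_set_cell_union_Int:
  assumes D: "0 < D"
  shows "grid_set (cell_union D N a \<inter> cell_union D N b) D N
    (\<lambda>k. adjacent_cell N a k \<and> adjacent_cell N b k)
    (\<lambda>k. a k \<and> b k)"
proof
  show "cell_union D N a \<inter> cell_union D N b \<subseteq> {0 .. real N / D}"
  proof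
    fix y assume "y \<in> cell_union D N a \<inter> cell_union D N b"
    then obtain k where "k < N" "real k / D \<le> y" "y \<le> (real k + 1) / D"
      by (auto simp: mem_cell_union)
    moreover have "(real k + 1) / D \<le> real N / D" using D \<open>k < N\<close> by (simp add: divide_right_mono)
    ultimately show "y \<in> {0 .. real N / D}" using D by (auto intro: order_trans[rotated])
  qed
qed (use D in \<open>auto simp: node_mem_cell_union open_cell_mem_cell_union adjacent_cell_def\<close>)

lemma measure_cell_union_Int:
  assumes "0 < D"
  shows "measure lborel (cell_union D N a \<inter> cell_union D N b) = card {k. k < N \<and> a k \<and> b k} / D"
proof -
  interpret grid_set "cell_union D N a \<inter> cell_union D N b" D N
    "\<lambda>k. adjacent_cell N a k \<and> adjacent_cell N b k"
    "\<lambda>k. a k \<and> b k"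
    using assms by (rule grid_set_cell_union_Int)
  show ?thesis by (rule measure_eq_card_cells)
qed

lemma card_components_cell_union_Int:
  assumes "0 < D"
  shows "card (components (cell_union D N a \<inter> cell_union D N b)) = card {k. k < N \<and> component_start a b k}"
proof -
  interpret grid_set "cell_union D N a \<inter> cell_union D N b" D N
    "\<lambda>k. adjacent_cell N a k \<and> adjacent_cell N b k"
    "\<lambda>k. a k \<and> b k"
    using assms by (rule grid_set_cell_union_Int)
  have "left_end k \<longleftrightarrow> k < N \<and> component_start a b k" for k
    unfolding left_end_def by (cases "k < N") (auto simp: component_start_def adjacent_cell_def)
  then show ?thesis using card_components by presburger
qed

section \<open>Common ancestors of neighbouring cells\<close>

definition shared_ancestors :: "nat \<Rightarrow> nat \<Rightarrow> nat \<Rightarrow> nat" where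
  "shared_ancestors M n k = card {j \<in> {1..n}. (k - 1) div M ^ (n - j) = k div M ^ (n - j)}"

lemma pred_div_eq_div_iff:
  fixes k d :: nat
  assumes "0 < k"
  shows "(k - 1) div d = k div d \<longleftrightarrow> \<not> d dvd k"
proof -
  obtain m where "k = Suc m" using assms by (cases k) auto
  then show ?thesis by (simp add: div_Suc dvd_eq_mod_eq_0)
qed

lemma shared_ancestors_eq_card_not_dvd:
  assumes "0 < k"
  shows "shared_ancestors M n k = card {j \<in> {1..n}. \<not> M ^ (n - j) dvd k}"
  unfolding shared_ancestors_def pred_div_eq_div_iff[OF assms] ..

lemma shared_ancestors_le: "shared_ancestors M n k \<le> n"
proof -
  have "shared_ancestors M n k \<le> card {1..n}"
    unfolding shared_ancestors_def by (intro card_mono) auto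
  then show ?thesis by simp
qed

lemma shared_ancestors_not_dvd:
  assumes "\<not> M dvd k"
  shows "shared_ancestors M (Suc n) k = n"
proof -
  have "0 < k" using assms by (metis dvd_0_right gr0I)
  have "{j \<in> {1..Suc n}. \<not> M ^ (Suc n - j) dvd k} = {1..n}"
  proof (intro set_eqI iffI)
    fix j assume j: "j \<in> {1..n}"
    then have "M dvd M ^ (Suc n - j)" by (simp add: Suc_diff_le)
    then show "j \<in> {j \<in> {1..Suc n}. \<not> M ^ (Suc n - j) dvd k}"
      using j assms dvd_trans by auto
  qed (auto simp: le_Suc_eq)
  then show ?thesis by (simp add: shared_ancestors_eq_card_not_dvd[OF \<open>0 < k\<close>])
qed

lemma shared_ancestors_mult:
  assumes "0 < M" "0 < a"
  shows "shared_ancestors M (Suc n) (M * a) = shared_ancestors M n a"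
proof -
  have "{j \<in> {1..Suc n}. \<not> M ^ (Suc n - j) dvd M * a} = {j \<in> {1..n}. \<not> M ^ (n - j) dvd a}"
  proof (intro set_eqI iffI)
    fix j assume j: "j \<in> {j \<in> {1..Suc n}. \<not> M ^ (Suc n - j) dvd M * a}"
    then have "j \<noteq> Suc n" by auto
    with j show "j \<in> {j \<in> {1..n}. \<not> M ^ (n - j) dvd a}"
      using assms by (auto simp: Suc_diff_le)
  qed (use assms in \<open>auto simp: Suc_diff_le\<close>)
  then show ?thesis using assms by (simp add: shared_ancestors_eq_card_not_dvd)
qed

lemma sum_shared_ancestors_Suc:
  fixes x :: real
  assumes "0 < M"
  shows "(\<Sum>k\<in>{1..<M ^ Suc n}. x ^ (Suc n - shared_ancestors M (Suc n) k))
    = x * (\<Sum>a\<in>{1..<M ^ n}. x ^ (n - shared_ancestors M n a)) + (real M - 1) * real M ^ n * x"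
proof -
  define A where "A = {1..<M ^ Suc n}"
  define f where "f k = x ^ (Suc n - shared_ancestors M (Suc n) k)" for k
  have multiples: "A \<inter> {k. M dvd k} = (\<lambda>a. M * a) ` {1..<M ^ n}"
    using assms by (auto simp: A_def image_iff elim!: dvdE)
  have inj: "inj_on (\<lambda>a. M * a) {1..<M ^ n}" using assms by (auto simp: inj_on_def)
  have "(\<Sum>k\<in>A \<inter> {k. M dvd k}. f k) = (\<Sum>a\<in>{1..<M ^ n}. x * x ^ (n - shared_ancestors M n a))"
  proof -
    have "f (M * a) = x * x ^ (n - shared_ancestors M n a)" if "a \<in> {1..<M ^ n}" for a
      using that assms shared_ancestors_le[of M n a]
      by (simp add: f_def shared_ancestors_mult Suc_diff_le)
    then show ?thesis unfolding multiples sum.reindex[OF inj] by (intro sum.cong) auto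
  qed
  moreover have "(\<Sum>k\<in>A - {k. M dvd k}. f k) = (real M - 1) * real M ^ n * x"
  proof -
    have "card (A - {k. M dvd k}) = card A - card (A \<inter> {k. M dvd k})"
      by (rule card_Diff_subset_Int) (simp add: A_def)
    also have "\<dots> = M ^ Suc n - M ^ n"
      unfolding multiples card_image[OF inj] using assms by (simp add: A_def)
    finally have "real (card (A - {k. M dvd k})) = (real M - 1) * real M ^ n"
      using assms by (simp add: of_nat_diff algebra_simps)
    moreover have "(\<Sum>k\<in>A - {k. M dvd k}. f k) = (\<Sum>k\<in>A - {k. M dvd k}. x)"
      by (intro sum.cong) (auto simp: f_def shared_ancestors_not_dvd)
    ultimately show ?thesis by simp
  qed
  ultimately show ?thesis
    using sum.Int_Diff[of A f "{k. M dvd k}"] by (simp add: A_def f_def sum_distrib_left)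
qed

lemma sum_shared_ancestors:
  fixes x :: real
  assumes "0 < M"
  shows "(real M - x) * (\<Sum>k\<in>{1..<M ^ n}. x ^ (n - shared_ancestors M n k))
    = (real M - 1) * x * (real M ^ n - x ^ n)"
proof (induction n)
  case (Suc n)
  let ?T = "\<lambda>n. \<Sum>k\<in>{1..<M ^ n}. x ^ (n - shared_ancestors M n k)"
  have "(real M - x) * ?T (Suc n)
      = x * ((real M - x) * ?T n) + (real M - x) * ((real M - 1) * real M ^ n * x)"
    unfolding sum_shared_ancestors_Suc[OF assms] by (simp add: algebra_simps)
  also have "\<dots> = (real M - 1) * x * (real M ^ Suc n - x ^ Suc n)"
    unfolding Suc.IH by (simp add: algebra_simps)
  finally show ?case .
qed simp

section \<open>Two independent percolations\<close>

lemma (in prob_space) prob_Un: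
  "A \<in> events \<Longrightarrow> B \<in> events \<Longrightarrow> prob (A \<union> B) = prob A + prob B - prob (A \<inter> B)"
  by (rule measure_Un3) (auto simp: fmeasurable_eq_sets)

lemma (in prob_space) prob_Un_Int_Un_eq_mult:
  assumes events: "A1 \<in> events" "B1 \<in> events" "A2 \<in> events" "B2 \<in> events"
    and indep: "\<And>U V. U \<in> {A1, B1, A1 \<inter> B1} \<Longrightarrow> V \<in> {A2, B2, A2 \<inter> B2} \<Longrightarrow>
      prob (U \<inter> V) = prob U * prob V"
  shows "prob ((A1 \<union> B1) \<inter> (A2 \<union> B2)) = prob (A1 \<union> B1) * prob (A2 \<union> B2)"
proof -
  have Un_Int: "prob ((A \<union> B) \<inter> C) = prob (A \<inter> C) + prob (B \<inter> C) - prob (A \<inter> B \<inter> C)"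
    if "A \<in> events" "B \<in> events" "C \<in> events" for A B C
  proof -
    have "(A \<union> B) \<inter> C = (A \<inter> C) \<union> (B \<inter> C)" "(A \<inter> C) \<inter> (B \<inter> C) = A \<inter> B \<inter> C"
      by auto
    then show ?thesis using prob_Un[of "A \<inter> C" "B \<inter> C"] that by simp
  qed
  have indep_Un2: "prob (U \<inter> (A2 \<union> B2)) = prob U * prob (A2 \<union> B2)"
    if U: "U \<in> {A1, B1, A1 \<inter> B1}" for U
  proof -
    have "prob (U \<inter> (A2 \<union> B2)) = prob (A2 \<inter> U) + prob (B2 \<inter> U) - prob (A2 \<inter> B2 \<inter> U)"
      using Un_Int[of A2 B2 U] U events by (auto simp: Int_commute)
    also have "\<dots> = prob A2 * prob U + prob B2 * prob U - prob (A2 \<inter> B2) * prob U"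
      using indep[OF U, of A2] indep[OF U, of B2] indep[OF U, of "A2 \<inter> B2"] by (simp add: Int_commute)
    also have "\<dots> = prob U * prob (A2 \<union> B2)"
      using events by (subst prob_Un) (auto simp: algebra_simps)
    finally show ?thesis .
  qed
  have "prob ((A1 \<union> B1) \<inter> (A2 \<union> B2))
      = prob (A1 \<inter> (A2 \<union> B2)) + prob (B1 \<inter> (A2 \<union> B2)) - prob (A1 \<inter> B1 \<inter> (A2 \<union> B2))"
    using events by (intro Un_Int) auto
  also have "\<dots> = prob (A1 \<union> B1) * prob (A2 \<union> B2)"
    using indep_Un2[of A1] indep_Un2[of B1] indep_Un2[of "A1 \<inter> B1"] events
    by (subst prob_Un[of A1 B1]) (auto simp: algebra_simps)
  finally show ?thesis .
qed

lemma (in prob_space) expectation_card_events: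
  assumes "finite I" and "\<And>i. i \<in> I \<Longrightarrow> E i \<in> events"
  shows "expectation (\<lambda>\<omega>. real (card {i \<in> I. \<omega> \<in> E i})) = (\<Sum>i\<in>I. prob (E i))"
proof -
  have "real (card {i \<in> I. \<omega> \<in> E i}) = (\<Sum>i\<in>I. indicator (E i) \<omega>)" for \<omega>
    using assms(1) by (simp add: indicator_def sum.If_cases Int_def)
  moreover have "integrable M (indicator (E i) :: 'a \<Rightarrow> real)" if "i \<in> I" for i
    using assms(2)[OF that] by (simp add: integrable_indicator_iff sets.Int_space_eq2 less_top[symmetric])
  ultimately show ?thesis
    using assms(2) by (simp add: Bochner_Integration.integral_sum sets.Int_space_eq2)
qed

lemma expected_components_closed_form:
  fixes p T1 T2 :: real
  assumes M: "2 \<le> M" and p: "0 \<le> p" "p \<le> 1"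
    and T1: "(real M - p) * T1 = (real M - 1) * p * (real M ^ n - p ^ n)"
    and T2: "(real M - p^2) * T2 = (real M - 1) * p^2 * (real M ^ n - (p^2) ^ n)"
  shows "p ^ (2 * n) * (3 * real M ^ n - 2 - 4 * T1 + T2)
    = (real M * p^2) ^ n *
        (3 - 2 / real M ^ n
           - 4 * p * (real M - 1) / (real M - p) * (1 - (p / real M) ^ n)
           + (real M - 1) * p^2 / (real M - p^2) * (1 - (p^2 / real M) ^ n))"
proof -
  have "p^2 \<le> 1" using p by (simp add: power_le_one)
  then have nz: "real M - p \<noteq> 0" "real M - p^2 \<noteq> 0" "real M ^ n \<noteq> 0" using M p by auto
  have sq: "(p^2) ^ n = (p ^ n)^2" "p ^ (2 * n) = (p ^ n)^2"
    by (metis power_mult mult.commute)+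
  have T: "T1 = (real M - 1) * p * (real M ^ n - p ^ n) / (real M - p)"
    "T2 = (real M - 1) * p^2 * (real M ^ n - (p ^ n)^2) / (real M - p^2)"
    using T1 T2 nz by (simp_all add: eq_divide_eq mult.commute sq)
  have pw: "(real M * p^2) ^ n = real M ^ n * (p ^ n)^2" "(p / real M) ^ n = p ^ n / real M ^ n"
    "(p^2 / real M) ^ n = (p ^ n)^2 / real M ^ n"
    by (simp_all add: power_mult_distrib power_divide sq)
  have rearrange: "a^2 * (3 * m - 2 - 4 * ((real M - 1) * p * (m - a) / d1)
          + (real M - 1) * p^2 * (m - a^2) / d2)
    = (m * a^2) * (3 - 2 / m - 4 * p * (real M - 1) / d1 * (1 - a / m)
          + (real M - 1) * p^2 / d2 * (1 - a^2 / m))"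
    if "d1 \<noteq> 0" "d2 \<noteq> 0" "m \<noteq> 0" for m a d1 d2
    using that by (simp add: field_simps)
  show ?thesis
    unfolding T pw sq(2) by (rule rearrange[OF nz])
qed

locale percolation_pair = prob_space P for P :: "'a measure" +
  fixes M :: nat and p :: real and xi :: "nat \<Rightarrow> nat \<times> nat \<Rightarrow> 'a \<Rightarrow> bool" and n :: nat
  assumes M_ge_2: "M \<ge> 2" and p_nonneg: "0 \<le> p" and p_le_1: "p \<le> 1"
    and indep_coins: "indep_vars (\<lambda>_. count_space UNIV) (\<lambda>(c, j, i). xi c (j, i))
           {(c, j, i). c \<in> {1, 2} \<and> 1 \<le> j \<and> i < M ^ j}"
    and prob_coin: "\<And>c j i. c \<in> {1, 2} \<Longrightarrow> 1 \<le> j \<Longrightarrow> i < M ^ j \<Longrightarrow>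
           measure P {\<omega> \<in> space P. xi c (j, i) \<omega>} = p"
begin

definition coins :: "(nat \<times> nat \<times> nat) set" where
  "coins = {(c, j, i). c \<in> {1, 2} \<and> 1 \<le> j \<and> i < M ^ j}"

definition coin :: "nat \<times> nat \<times> nat \<Rightarrow> 'a \<Rightarrow> bool" where
  "coin = (\<lambda>(c, j, i). xi c (j, i))"

definition heads :: "(nat \<times> nat \<times> nat) set \<Rightarrow> 'a set" where
  "heads J = {\<omega> \<in> space P. \<forall>x\<in>J. coin x \<omega>}"

lemma heads_Int_heads: "heads A \<inter> heads B = heads (A \<union> B)"
  by (auto simp: heads_def)

lemma heads_eq_INT: "J \<noteq> {} \<Longrightarrow> heads J = (\<Inter>x\<in>J. coin x -` {True} \<inter> space P)"
  by (auto simp: heads_def)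

lemma sets_heads:
  assumes "finite J" "J \<subseteq> coins"
  shows "heads J \<in> events"
proof (cases "J = {}")
  case False
  have "coin x \<in> measurable P (count_space UNIV)" if "x \<in> J" for x
    using indep_coins that assms(2) by (auto simp: indep_vars_def coins_def coin_def)
  then show ?thesis
    unfolding heads_eq_INT[OF False] using assms(1) False by (intro sets.finite_INT) auto
qed (simp add: heads_def)

lemma prob_heads:
  assumes "finite J" "J \<subseteq> coins"
  shows "prob (heads J) = p ^ card J"
proof (cases "J = {}")
  case False
  have "prob (heads J) = (\<Prod>x\<in>J. prob (coin x -` {True} \<inter> space P))"
    unfolding heads_eq_INT[OF False] coin_def
    using indep_coins assms False unfolding coins_def by (intro indep_varsD) auto
  also have "\<dots> = (\<Prod>x\<in>J. p)"
  proof (intro prod.cong refl)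
    fix x assume "x \<in> J"
    then obtain c j i where "x = (c, j, i)" "c \<in> {1, 2}" "1 \<le> j" "i < M ^ j"
      using assms(2) by (auto simp: coins_def)
    then show "prob (coin x -` {True} \<inter> space P) = p"
      using prob_coin by (simp add: coin_def Collect_conj_eq Int_commute vimage_def)
  qed
  finally show ?thesis by simp
qed (simp add: heads_def prob_space)

lemma prob_heads_Int_heads:
  assumes "finite A" "A \<subseteq> coins" "finite B" "B \<subseteq> coins" "A \<inter> B = {}"
  shows "prob (heads A \<inter> heads B) = prob (heads A) * prob (heads B)"
  using assms by (simp add: heads_Int_heads prob_heads card_Un_disjoint power_add)

definition ancestors :: "nat \<Rightarrow> nat \<Rightarrow> (nat \<times> nat \<times> nat) set" where
  "ancestors c k = (\<lambda>j. (c, j, k div M ^ (n - j))) ` {1..n}"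

definition kept :: "nat \<Rightarrow> 'a \<Rightarrow> nat \<Rightarrow> bool" where
  "kept c \<omega> k \<longleftrightarrow> (\<forall>j\<in>{1..n}. xi c (j, k div M ^ (n - j)) \<omega>)"

lemma finite_ancestors: "finite (ancestors c k)"
  by (simp add: ancestors_def)

lemma ancestors_subset_coins:
  assumes "c \<in> {1, 2}" "k < M ^ n"
  shows "ancestors c k \<subseteq> coins"
proof
  fix x assume "x \<in> ancestors c k"
  then obtain j where j: "j \<in> {1..n}" "x = (c, j, k div M ^ (n - j))" by (auto simp: ancestors_def)
  have "M ^ n = M ^ j * M ^ (n - j)" using j by (simp flip: power_add)
  then have "k div M ^ (n - j) < M ^ j" using assms M_ge_2 by (simp add: div_less_iff_less_mult)
  then show "x \<in> coins" using j assms by (auto simp: coins_def)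
qed

lemma card_ancestors: "card (ancestors c k) = n"
  unfolding ancestors_def by (subst card_image) (auto simp: inj_on_def)

lemma ancestors_disjoint: "c \<noteq> c' \<Longrightarrow> ancestors c k \<inter> ancestors c' k' = {}"
  by (auto simp: ancestors_def)

lemma card_ancestors_pred_Int:
  "card (ancestors c (k - 1) \<inter> ancestors c k) = shared_ancestors M n k"
proof -
  have "ancestors c (k - 1) \<inter> ancestors c k = (\<lambda>j. (c, j, k div M ^ (n - j))) `
          {j \<in> {1..n}. (k - 1) div M ^ (n - j) = k div M ^ (n - j)}"
    by (auto simp: ancestors_def image_iff)
  then show ?thesis
    unfolding shared_ancestors_def by (simp add: card_image inj_on_def)
qed

lemma card_ancestors_pred_Un:
  "card (ancestors c (k - 1) \<union> ancestors c k) = 2 * n - shared_ancestors M n k"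
  using card_Un_Int[OF finite_ancestors finite_ancestors, of c "k - 1" c k]
  unfolding card_ancestors card_ancestors_pred_Int by simp

lemma mem_heads_ancestors: "\<omega> \<in> heads (ancestors c k) \<longleftrightarrow> \<omega> \<in> space P \<and> kept c \<omega> k"
  by (auto simp: heads_def ancestors_def kept_def coin_def)

lemma percol_step_eq_cell_union:
  "percol_step M (\<lambda>x. xi c x \<omega>) n = cell_union (real M ^ n) (M ^ n) (kept c \<omega>)"
  unfolding percol_step_def cell_union_def grid_interval_def kept_def by auto

abbreviation percol_Int :: "'a \<Rightarrow> real set" where
  "percol_Int \<omega> \<equiv> percol_step M (\<lambda>x. xi 1 x \<omega>) n \<inter> percol_step M (\<lambda>x. xi 2 x \<omega>) n"

definition kept_both :: "nat \<Rightarrow> 'a set" where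
  "kept_both k = heads (ancestors 1 k \<union> ancestors 2 k)"

definition start_event :: "nat \<Rightarrow> 'a set" where
  "start_event k = {\<omega> \<in> space P. component_start (kept 1 \<omega>) (kept 2 \<omega>) k}"

lemma mem_kept_both: "\<omega> \<in> kept_both k \<longleftrightarrow> \<omega> \<in> space P \<and> kept 1 \<omega> k \<and> kept 2 \<omega> k"
  by (auto simp: kept_both_def mem_heads_ancestors simp flip: heads_Int_heads)

lemma sets_heads_ancestors: "c \<in> {1, 2} \<Longrightarrow> k < M ^ n \<Longrightarrow> heads (ancestors c k) \<in> events"
  by (intro sets_heads finite_ancestors ancestors_subset_coins)

lemma prob_heads_ancestors: "c \<in> {1, 2} \<Longrightarrow> k < M ^ n \<Longrightarrow> prob (heads (ancestors c k)) = p ^ n"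
  by (simp add: prob_heads finite_ancestors ancestors_subset_coins card_ancestors)

lemma sets_kept_both: "k < M ^ n \<Longrightarrow> kept_both k \<in> events"
  unfolding kept_both_def using ancestors_subset_coins by (intro sets_heads) (auto simp: finite_ancestors)

lemma prob_kept_both: "k < M ^ n \<Longrightarrow> prob (kept_both k) = p ^ (2 * n)"
  unfolding kept_both_def using ancestors_subset_coins ancestors_disjoint[of 1 2]
  by (simp add: prob_heads finite_ancestors card_Un_disjoint card_ancestors mult_2)

lemma start_event_0: "start_event 0 = kept_both 0"
  by (auto simp: start_event_def component_start_def mem_kept_both)

lemma start_event_pos:
  assumes "0 < k"
  shows "start_event k =
    (heads (ancestors 1 (k - 1)) \<union> heads (ancestors 1 k)) \<inter>
    (heads (ancestors 2 (k - 1)) \<union> heads (ancestors 2 k)) - kept_both (k - 1)"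
  using assms by (auto simp: start_event_def component_start_def mem_kept_both mem_heads_ancestors)

lemma prob_kept_pred_or_kept:
  assumes "c \<in> {1, 2}" "0 < k" "k < M ^ n"
  shows "prob (heads (ancestors c (k - 1)) \<union> heads (ancestors c k))
    = 2 * p ^ n - p ^ (2 * n - shared_ancestors M n k)"
proof -
  have "k - 1 < M ^ n" using assms by simp
  then have "prob (heads (ancestors c (k - 1)) \<union> heads (ancestors c k))
      = p ^ n + p ^ n - prob (heads (ancestors c (k - 1) \<union> ancestors c k))"
    using assms by (simp add: prob_Un sets_heads_ancestors prob_heads_ancestors heads_Int_heads)
  also have "prob (heads (ancestors c (k - 1) \<union> ancestors c k)) = p ^ card (ancestors c (k - 1) \<union> ancestors c k)"
    using assms \<open>k - 1 < M ^ n\<close> ancestors_subset_coins by (simp add: prob_heads finite_ancestors)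
  also have "card (ancestors c (k - 1) \<union> ancestors c k) = 2 * n - shared_ancestors M n k"
    by (rule card_ancestors_pred_Un)
  finally show ?thesis by simp
qed

lemma prob_heads_Int_heads_copies:
  assumes "A \<subseteq> ancestors 1 k \<union> ancestors 1 k'" "B \<subseteq> ancestors 2 k \<union> ancestors 2 k'"
    and "k < M ^ n" "k' < M ^ n"
  shows "prob (heads A \<inter> heads B) = prob (heads A) * prob (heads B)"
proof (rule prob_heads_Int_heads)
  have "ancestors 1 i \<inter> ancestors 2 j = {}" for i j by (rule ancestors_disjoint) simp
  then show "A \<inter> B = {}" using assms(1,2) by blast
  show "A \<subseteq> coins" "B \<subseteq> coins" using assms ancestors_subset_coins by blast+
  show "finite A" "finite B" using assms(1,2) finite_ancestors by (meson finite_Un finite_subset)+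
qed

lemma prob_start_event:
  assumes "0 < k" "k < M ^ n"
  shows "prob (start_event k) = (2 * p ^ n - p ^ (2 * n - shared_ancestors M n k))^2 - p ^ (2 * n)"
proof -
  have k: "k - 1 < M ^ n" using assms by simp
  define E where "E c = heads (ancestors c (k - 1)) \<union> heads (ancestors c k)" for c
  have "kept_both (k - 1) \<subseteq> E 1 \<inter> E 2"
    by (auto simp: E_def kept_both_def simp flip: heads_Int_heads)
  moreover have "prob (U \<inter> V) = prob U * prob V"
    if U: "U \<in> {heads (ancestors 1 (k - 1)), heads (ancestors 1 k),
              heads (ancestors 1 (k - 1)) \<inter> heads (ancestors 1 k)}"
    and V: "V \<in> {heads (ancestors 2 (k - 1)), heads (ancestors 2 k),
              heads (ancestors 2 (k - 1)) \<inter> heads (ancestors 2 k)}" for U V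
  proof -
    have heads_family: "\<exists>A \<subseteq> X \<union> Y. W = heads A" if "W \<in> {heads X, heads Y, heads X \<inter> heads Y}" for W X Y
      using that by (elim insertE emptyE) (use heads_Int_heads in blast)+
    obtain A B where "A \<subseteq> ancestors 1 (k - 1) \<union> ancestors 1 k" "U = heads A"
      and "B \<subseteq> ancestors 2 (k - 1) \<union> ancestors 2 k" "V = heads B"
      using heads_family[OF U] heads_family[OF V] by blast
    then show ?thesis using prob_heads_Int_heads_copies k assms(2) by simp
  qed
  then have "prob (E 1 \<inter> E 2) = prob (E 1) * prob (E 2)"
    unfolding E_def using assms k sets_heads_ancestors
    by (intro prob_Un_Int_Un_eq_mult) auto
  moreover have "E c \<in> events" if "c \<in> {1, 2}" for c
    using that assms k sets_heads_ancestors by (auto simp: E_def)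
  ultimately have "prob (start_event k) = prob (E 1) * prob (E 2) - prob (kept_both (k - 1))"
    unfolding start_event_pos[OF assms(1)] E_def[symmetric]
    using sets_kept_both[OF k] by (simp add: finite_measure_Diff)
  moreover have "prob (E c) = 2 * p ^ n - p ^ (2 * n - shared_ancestors M n k)" if "c \<in> {1, 2}" for c
    unfolding E_def by (rule prob_kept_pred_or_kept[OF that assms])
  ultimately show ?thesis
    using prob_kept_both[OF k] by (simp add: power2_eq_square)
qed

lemma V1_percol_Int:
  assumes "\<omega> \<in> space P"
  shows "V1 (percol_Int \<omega>) = real (card {k \<in> {..<M ^ n}. \<omega> \<in> kept_both k}) / real M ^ n"
  using M_ge_2 assms
  by (simp add: V1_def percol_step_eq_cell_union measure_cell_union_Int mem_kept_both)

lemma V0_percol_Int: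
  assumes "\<omega> \<in> space P"
  shows "V0 (percol_Int \<omega>) = real (card {k \<in> {..<M ^ n}. \<omega> \<in> start_event k})"
  using M_ge_2 assms
  by (simp add: V0_def percol_step_eq_cell_union card_components_cell_union_Int start_event_def)

lemma expectation_V1: "expectation (\<lambda>\<omega>. V1 (percol_Int \<omega>)) = p ^ (2 * n)"
proof -
  have "expectation (\<lambda>\<omega>. V1 (percol_Int \<omega>))
      = expectation (\<lambda>\<omega>. real (card {k \<in> {..<M ^ n}. \<omega> \<in> kept_both k}) / real M ^ n)"
    by (rule Bochner_Integration.integral_cong[OF refl], rule V1_percol_Int)
  also have "\<dots> = expectation (\<lambda>\<omega>. real (card {k \<in> {..<M ^ n}. \<omega> \<in> kept_both k})) / real M ^ n"
    by (rule integral_divide_zero)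
  also have "\<dots> = (\<Sum>k<M ^ n. prob (kept_both k)) / real M ^ n"
    by (subst expectation_card_events) (auto simp: sets_kept_both)
  also have "\<dots> = p ^ (2 * n)"
    using M_ge_2 by (simp add: prob_kept_both)
  finally show ?thesis .
qed

lemma expectation_V0:
  "expectation (\<lambda>\<omega>. V0 (percol_Int \<omega>)) = p ^ (2 * n) +
    (\<Sum>k\<in>{1..<M ^ n}. (2 * p ^ n - p ^ (2 * n - shared_ancestors M n k))^2 - p ^ (2 * n))"
proof -
  have sets_start_event: "start_event k \<in> events" if "k < M ^ n" for k
  proof (cases "k = 0")
    case True
    then show ?thesis using that by (simp add: start_event_0 sets_kept_both)
  next
    case False
    then show ?thesis using that sets_heads_ancestors sets_kept_both
      by (simp add: start_event_pos sets.Diff sets.Int sets.Un)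
  qed
  have "expectation (\<lambda>\<omega>. V0 (percol_Int \<omega>))
      = expectation (\<lambda>\<omega>. real (card {k \<in> {..<M ^ n}. \<omega> \<in> start_event k}))"
    by (rule Bochner_Integration.integral_cong[OF refl], rule V0_percol_Int)
  also have "\<dots> = (\<Sum>k<M ^ n. prob (start_event k))"
    by (rule expectation_card_events) (auto simp: sets_start_event)
  also have "\<dots> = prob (start_event 0) + (\<Sum>k\<in>{1..<M ^ n}. prob (start_event k))"
    using M_ge_2 by (simp add: lessThan_atLeast0 sum.atLeast_Suc_lessThan)
  finally show ?thesis
    using M_ge_2 by (simp add: start_event_0 prob_kept_both prob_start_event)
qed

lemma expectation_V0_closed_form:
  "expectation (\<lambda>\<omega>. V0 (percol_Int \<omega>)) = (real M * p^2) ^ n *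
     (3 - 2 / real M ^ n
        - 4 * p * (real M - 1) / (real M - p) * (1 - (p / real M) ^ n)
        + (real M - 1) * p^2 / (real M - p^2) * (1 - (p^2 / real M) ^ n))"
proof -
  define T where "T x = (\<Sum>k\<in>{1..<M ^ n}. x ^ (n - shared_ancestors M n k))" for x :: real
  have summand: "(2 * p ^ n - p ^ (2 * n - s))^2 - p ^ (2 * n) = p ^ (2 * n) * (3 - 4 * p ^ (n - s) + (p^2) ^ (n - s))"
    if "s \<le> n" for s
  proof -
    have "2 * n - s = n + (n - s)" using that by simp
    then have "p ^ (2 * n - s) = p ^ n * p ^ (n - s)" by (simp add: power_add)
    moreover have "p ^ (2 * n) = (p ^ n)^2" "(p^2) ^ (n - s) = (p ^ (n - s))^2"
      by (metis power_mult mult.commute)+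
    ultimately show ?thesis by (simp add: power2_eq_square algebra_simps)
  qed
  have "(\<Sum>k\<in>{1..<M ^ n}. (2 * p ^ n - p ^ (2 * n - shared_ancestors M n k))^2 - p ^ (2 * n))
      = (\<Sum>k\<in>{1..<M ^ n}. p ^ (2 * n) * (3 - 4 * p ^ (n - shared_ancestors M n k)
          + (p^2) ^ (n - shared_ancestors M n k)))"
    by (intro sum.cong refl summand shared_ancestors_le)
  also have "\<dots> = p ^ (2 * n) * (3 * real (card {1..<M ^ n}) - 4 * T p + T (p^2))"
    by (simp add: T_def sum.distrib sum_subtractf flip: sum_distrib_left)
  also have "real (card {1..<M ^ n}) = real M ^ n - 1"
    using M_ge_2 by (simp add: of_nat_diff)
  finally have "expectation (\<lambda>\<omega>. V0 (percol_Int \<omega>)) = p ^ (2 * n) * (3 * real M ^ n - 2 - 4 * T p + T (p^2))"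
    unfolding expectation_V0 by (simp add: algebra_simps)
  also have "\<dots> = (real M * p^2) ^ n *
     (3 - 2 / real M ^ n
        - 4 * p * (real M - 1) / (real M - p) * (1 - (p / real M) ^ n)
        + (real M - 1) * p^2 / (real M - p^2) * (1 - (p^2 / real M) ^ n))"
    using M_ge_2 p_nonneg p_le_1 sum_shared_ancestors[of M p n] sum_shared_ancestors[of M "p^2" n]
    by (intro expected_components_closed_form) (auto simp: T_def)
  finally show ?thesis .
qed

end

theorem proposition4p4:
  fixes P :: "'a measure" and M :: nat and p :: real
    and xi :: "nat \<Rightarrow> nat \<times> nat \<Rightarrow> 'a \<Rightarrow> bool"
  assumes "prob_space P"
    and "M \<ge> 2" and "0 \<le> p" and "p \<le> 1"
    and "prob_space.indep_vars P (\<lambda>_. count_space UNIV) (\<lambda>(c, j, i). xi c (j, i))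
           {(c, j, i). c \<in> {1, 2} \<and> 1 \<le> j \<and> i < M ^ j}"
    and "\<And>c j i. c \<in> {1, 2} \<Longrightarrow> 1 \<le> j \<Longrightarrow> i < M ^ j \<Longrightarrow>
           measure P {\<omega> \<in> space P. xi c (j, i) \<omega>} = p"
  shows "prob_space.expectation P
           (\<lambda>\<omega>. V1 (percol_step M (\<lambda>x. xi 1 x \<omega>) n \<inter> percol_step M (\<lambda>x. xi 2 x \<omega>) n))
         = p ^ (2 * n) \<and>
         prob_space.expectation P
           (\<lambda>\<omega>. V0 (percol_step M (\<lambda>x. xi 1 x \<omega>) n \<inter> percol_step M (\<lambda>x. xi 2 x \<omega>) n))
         = (real M * p^2) ^ n *
           (3 - 2 / real M ^ n
              - 4 * p * (real M - 1) / (real M - p) * (1 - (p / real M) ^ n)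
              + (real M - 1) * p^2 / (real M - p^2) * (1 - (p^2 / real M) ^ n))"
proof -
  interpret percolation_pair P M p xi n
    using assms by (intro percolation_pair.intro percolation_pair_axioms.intro) auto
  show ?thesis using expectation_V1 expectation_V0_closed_form by simp
qed

end
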